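(* For every $n\in\mathbb{N}$ and every integer $k\ge 3$, there exists a graph $G$ on $kn$ vertices, of pathwidth $2k-1$ and maximum degree $3k-1$, such that $\pi_\alpha(G)\ge (k-2)\log_2(n/3)$.
   Context: A string $s=s_1,\ldots,s_{2k}$ (of even length) is an anagram if $s_1,\ldots,s_k$ is a permutation of $s_{k+1},\ldots,s_{2k}$. For a graph $G$, a colouring $\varphi:V(G)\to\{1,\ldots,c\}$ is anagram-free if for every path $v_1,v_2,\ldots,v_{2m}$ in $G$ with an even number $2m\ge 2$ of vertices (i.e., an odd number of edges), the string $\varphi(v_1),\ldots,\varphi(v_{2m})$ is not an anagram. The anagram-free chromatic number $\pi_\alpha(G)$ is the smallest $c$ such that $G$ has an anagram-free colouring with $c$ colours. *)

theory Defs
  imports Complex_Main "HOL-Library.Multiset"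
begin

definition sgraph :: "'a set \<Rightarrow> ('a \<Rightarrow> 'a \<Rightarrow> bool) \<Rightarrow> bool" where
  "sgraph V E \<longleftrightarrow> finite V \<and>
     (\<forall>u v. E u v \<longrightarrow> u \<in> V \<and> v \<in> V \<and> u \<noteq> v \<and> E v u)"

definition degree :: "('a \<Rightarrow> 'a \<Rightarrow> bool) \<Rightarrow> 'a \<Rightarrow> nat" where
  "degree E v = card {u. E v u}"

definition max_degree :: "'a set \<Rightarrow> ('a \<Rightarrow> 'a \<Rightarrow> bool) \<Rightarrow> nat" where
  "max_degree V E = Max (insert 0 (degree E ` V))"

definition is_path :: "'a set \<Rightarrow> ('a \<Rightarrow> 'a \<Rightarrow> bool) \<Rightarrow> 'a list \<Rightarrow> bool" where
  "is_path V E xs \<longleftrightarrow> xs \<noteq> [] \<and> distinct xs \<and> set xs \<subseteq> V \<and>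
     (\<forall>i. Suc i < length xs \<longrightarrow> E (xs ! i) (xs ! Suc i))"

definition anagram :: "'b list \<Rightarrow> bool" where
  "anagram s \<longleftrightarrow> even (length s) \<and>
     mset (take (length s div 2) s) = mset (drop (length s div 2) s)"

definition anagram_free_colouring ::
  "'a set \<Rightarrow> ('a \<Rightarrow> 'a \<Rightarrow> bool) \<Rightarrow> ('a \<Rightarrow> nat) \<Rightarrow> nat \<Rightarrow> bool" where
  "anagram_free_colouring V E \<phi> c \<longleftrightarrow> \<phi> ` V \<subseteq> {1..c} \<and>
     (\<forall>xs. is_path V E xs \<and> even (length xs) \<and> length xs \<ge> 2 \<longrightarrow> \<not> anagram (map \<phi> xs))"

definition anagram_chromatic_number :: "'a set \<Rightarrow> ('a \<Rightarrow> 'a \<Rightarrow> bool) \<Rightarrow> nat" where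
  "anagram_chromatic_number V E = (LEAST c. \<exists>\<phi>. anagram_free_colouring V E \<phi> c)"

definition path_decomposition :: "'a set \<Rightarrow> ('a \<Rightarrow> 'a \<Rightarrow> bool) \<Rightarrow> 'a set list \<Rightarrow> bool" where
  "path_decomposition V E Bs \<longleftrightarrow>
     (\<forall>B\<in>set Bs. B \<subseteq> V) \<and>
     (\<forall>v\<in>V. \<exists>B\<in>set Bs. v \<in> B) \<and>
     (\<forall>u v. E u v \<longrightarrow> (\<exists>B\<in>set Bs. u \<in> B \<and> v \<in> B)) \<and>
     (\<forall>v i j l. i \<le> j \<and> j \<le> l \<and> l < length Bs \<and> v \<in> Bs ! i \<and> v \<in> Bs ! l \<longrightarrow> v \<in> Bs ! j)"

definition pathwidth :: "'a set \<Rightarrow> ('a \<Rightarrow> 'a \<Rightarrow> bool) \<Rightarrow> nat" where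
  "pathwidth V E = (LEAST w. \<exists>Bs. path_decomposition V E Bs \<and> (\<forall>B\<in>set Bs. card B \<le> w + 1))"

end

theory Submission
  imports Defs
begin

text \<open>The graph is the path P_n with every vertex blown up into a clique of size k (a block),
  consecutive blocks being completely joined.  The key claim is that in an anagram-free colouring
  every range of consecutive blocks contains a block with at least k - 2 vertices whose colours occur
  nowhere else in the range.  Removing that block and recursing into the longer half gives k - 2 new
  colours per halving, hence (k - 2) log n colours in total.

  The claim is proved by contradiction.  Otherwise each block has at least three vertices whose
  colour is repeated in the range.  Using Hall's theorem one deletes one vertex from each colour class
  of odd size so that every block keeps two of them; an Eulerian orientation of the multigraph joining
  every remaining vertex's block to its colour then splits the remaining vertices into two parts A
  and B with the same multiset of colours, both meeting every block.  Walking through A from left to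
  right and back through B gives a path whose colour word is an anagram.\<close>

lemma count_image_mset_mset_set:
  "finite A \<Longrightarrow> count (image_mset f (mset_set A)) y = card {x\<in>A. f x = y}"
  by (simp add: count_image_mset Int_def conj_commute)

lemma card_eq_sum_card_fibres:
  assumes "finite A"
  shows "card A = (\<Sum>y\<in>f ` A. card {x\<in>A. f x = y})"
proof -
  have "card A = (\<Sum>x\<in>A. 1::nat)"
    by simp
  also have "\<dots> = (\<Sum>y\<in>f ` A. \<Sum>x\<in>{x\<in>A. f x = y}. 1)"
    using assms by (rule sum.image_gen)
  finally show ?thesis
    by simp
qed

lemma even_card_odd_fibres:
  assumes "finite W" and "\<And>x. even (card {v\<in>W. \<phi> v = x})"
  shows "even (card {m \<in> col ` W. odd (card {v\<in>W. col v = m})})"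
proof -
  have "even (card W)"
    using assms by (simp add: card_eq_sum_card_fibres[of W \<phi>] dvd_sum)
  then show ?thesis
    using assms(1) by (simp add: card_eq_sum_card_fibres[of W col] even_sum_iff)
qed

section \<open>Hall's theorem\<close>

lemma sdr_Un:
  assumes "inj_on f K" "\<forall>i\<in>K. f i \<in> A i \<inter> U" "inj_on g L" "\<forall>i\<in>L. g i \<in> A i - U"
  shows "\<exists>h. inj_on h (K \<union> L) \<and> (\<forall>i\<in>K \<union> L. h i \<in> A i)"
proof -
  define h where "h i = (if i \<in> K then f i else g i)" for i
  have "inj_on h (K \<union> L)"
    using assms unfolding h_def inj_on_def by (metis DiffD2 IntD2 UnE)
  moreover have "\<forall>i\<in>K \<union> L. h i \<in> A i"
    using assms unfolding h_def by auto
  ultimately show ?thesis by blast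
qed

lemma hall_condition_Diff_tight:
  assumes hall: "\<And>K. K \<subseteq> I \<Longrightarrow> card K \<le> card (\<Union>(A ` K))"
    and fin: "finite I" "\<And>i. i \<in> I \<Longrightarrow> finite (A i)"
    and K: "K \<subseteq> I" "card (\<Union>(A ` K)) = card K" and L: "L \<subseteq> I - K"
  shows "card L \<le> card (\<Union>i\<in>L. A i - \<Union>(A ` K))"
proof -
  define D where "D = (\<Union>i\<in>L. A i - \<Union>(A ` K))"
  have "L \<subseteq> I" "K \<inter> L = {}"
    using L by blast+
  have "finite K" "finite L"
    using K(1) \<open>L \<subseteq> I\<close> fin(1) by (simp_all add: finite_subset)
  have "finite (\<Union>(A ` K))"
    using \<open>finite K\<close> K(1) fin(2) by (intro finite_UN_I) auto
  have "finite D"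
    unfolding D_def using \<open>finite L\<close> \<open>L \<subseteq> I\<close> fin(2) by (intro finite_UN_I) auto
  have "card K + card L = card (K \<union> L)"
    using \<open>finite K\<close> \<open>finite L\<close> \<open>K \<inter> L = {}\<close> by (rule card_Un_disjoint[symmetric])
  also have "\<dots> \<le> card (\<Union>(A ` (K \<union> L)))"
    using K(1) \<open>L \<subseteq> I\<close> by (intro hall) simp
  also have "\<Union>(A ` (K \<union> L)) = D \<union> \<Union>(A ` K)"
    unfolding D_def by blast
  also have "card (D \<union> \<Union>(A ` K)) = card D + card K"
    using \<open>finite D\<close> \<open>finite (\<Union>(A ` K))\<close> K(2) by (subst card_Un_disjoint) (auto simp: D_def)
  finally show ?thesis
    unfolding D_def by simp
qed

lemma hall_condition_Diff_surplus:
  assumes surplus: "\<And>K. K \<subseteq> I \<Longrightarrow> K \<noteq> {} \<Longrightarrow> K \<noteq> I \<Longrightarrow> card K < card (\<Union>(A ` K))"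
    and fin: "finite I" "\<And>i. i \<in> I \<Longrightarrow> finite (A i)"
    and "i0 \<in> I" and L: "L \<subseteq> I - {i0}"
  shows "card L \<le> card (\<Union>i\<in>L. A i - {x})"
proof (cases "L = {}")
  case False
  define D where "D = (\<Union>i\<in>L. A i - {x})"
  have "L \<subseteq> I"
    using L by blast
  then have "finite L"
    using fin(1) by (rule finite_subset)
  then have "finite D"
    unfolding D_def using fin \<open>L \<subseteq> I\<close> by auto
  have "card L < card (\<Union>(A ` L))"
    using surplus[of L] False L \<open>i0 \<in> I\<close> by blast
  also have "\<dots> \<le> card (insert x D)"
    using \<open>finite D\<close> unfolding D_def by (intro card_mono) auto
  also have "\<dots> \<le> Suc (card D)"
    using \<open>finite D\<close> by (simp add: card_insert_if)
  finally show ?thesis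
    unfolding D_def by simp
qed simp

theorem Hall_marriage:
  assumes "finite I" "\<And>i. i \<in> I \<Longrightarrow> finite (A i)"
    and "\<And>K. K \<subseteq> I \<Longrightarrow> card K \<le> card (\<Union>(A ` K))"
  shows "\<exists>f. inj_on f I \<and> (\<forall>i\<in>I. f i \<in> A i)"
  using assms
proof (induction "card I" arbitrary: I A rule: less_induct)
  case less
  note fin = less.prems(1,2) and hall = less.prems(3)
  show ?case
  proof (cases "\<exists>K. K \<subseteq> I \<and> K \<noteq> {} \<and> K \<noteq> I \<and> card (\<Union>(A ` K)) = card K")
    case True
    \<comment> \<open>a tight proper subfamily: match it inside its own union, the rest outside\<close>
    then obtain K where K: "K \<subseteq> I" "K \<noteq> {}" "K \<noteq> I" "card (\<Union>(A ` K)) = card K"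
      by blast
    have "finite K"
      using K(1) fin(1) by (rule finite_subset)
    have "card K < card I"
      using K(1,3) fin(1) by (simp add: psubset_card_mono psubset_eq)
    moreover have "0 < card K"
      using K(2) \<open>finite K\<close> by (simp add: card_gt_0_iff)
    ultimately have "card (I - K) < card I"
      using card_Diff_subset[OF \<open>finite K\<close> K(1)] by linarith
    have "\<exists>f. inj_on f K \<and> (\<forall>i\<in>K. f i \<in> A i)"
      by (rule less.hyps[OF \<open>card K < card I\<close> \<open>finite K\<close>]) (use fin(2) hall K(1) in auto)
    then obtain f where "inj_on f K" "\<forall>i\<in>K. f i \<in> A i \<inter> \<Union>(A ` K)"
      by blast
    moreover have "\<exists>g. inj_on g (I - K) \<and> (\<forall>i\<in>I - K. g i \<in> A i - \<Union>(A ` K))"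
      by (rule less.hyps[OF \<open>card (I - K) < card I\<close>])
        (use fin hall_condition_Diff_tight[OF hall fin K(1,4)] in auto)
    then obtain g where "inj_on g (I - K)" "\<forall>i\<in>I - K. g i \<in> A i - \<Union>(A ` K)"
      by blast
    ultimately show ?thesis
      using sdr_Un[of f K A "\<Union>(A ` K)" g "I - K"] K(1) by (simp add: Un_absorb1)
  next
    case no_tight: False
    show ?thesis
    proof (cases "I = {}")
      case False
      then obtain i0 where "i0 \<in> I" by blast
      then have "A i0 \<noteq> {}"
        using hall[of "{i0}"] by auto
      then obtain x where "x \<in> A i0"
        by blast
      have surplus: "card K < card (\<Union>(A ` K))" if "K \<subseteq> I" "K \<noteq> {}" "K \<noteq> I" for K
      proof -
        have "card (\<Union>(A ` K)) \<noteq> card K"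
          using no_tight that by blast
        then show ?thesis
          using hall[OF that(1)] by linarith
      qed
      have "card (I - {i0}) < card I"
        using fin(1) \<open>i0 \<in> I\<close> by (rule card_Diff1_less)
      then have "\<exists>g. inj_on g (I - {i0}) \<and> (\<forall>i\<in>I - {i0}. g i \<in> A i - {x})"
        by (rule less.hyps) (use fin hall_condition_Diff_surplus[OF surplus fin \<open>i0 \<in> I\<close>] in auto)
      then obtain g where "inj_on g (I - {i0})" "\<forall>i\<in>I - {i0}. g i \<in> A i - {x}"
        by blast
      then show ?thesis
        using sdr_Un[of "\<lambda>_. x" "{i0}" A "{x}" g "I - {i0}"] \<open>x \<in> A i0\<close> \<open>i0 \<in> I\<close>
        by (simp add: insert_absorb)
    qed simp
  qed
qed

lemma Hall_capacitated:
  fixes A :: "'i \<Rightarrow> 'm set" and cap :: "'m \<Rightarrow> nat"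
  assumes "finite I" "\<And>i. i \<in> I \<Longrightarrow> finite (A i)"
    and hall: "\<And>K. K \<subseteq> I \<Longrightarrow> card K \<le> (\<Sum>m\<in>\<Union>(A ` K). cap m)"
  shows "\<exists>g. (\<forall>i\<in>I. g i \<in> A i) \<and> (\<forall>m. card {i\<in>I. g i = m} \<le> cap m)"
proof -
  \<comment> \<open>Hall's theorem for the family of slots, m offering cap m slots\<close>
  have "\<exists>f. inj_on f I \<and> (\<forall>i\<in>I. f i \<in> Sigma (A i) (\<lambda>m. {..<cap m}))"
  proof (rule Hall_marriage)
    fix K
    assume "K \<subseteq> I"
    then have "finite K"
      using assms(1) by (rule finite_subset)
    then have "finite (\<Union>(A ` K))"
      using assms(2) \<open>K \<subseteq> I\<close> by auto
    moreover have "(\<Union>i\<in>K. Sigma (A i) (\<lambda>m. {..<cap m})) = Sigma (\<Union>(A ` K)) (\<lambda>m. {..<cap m})"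
      by blast
    ultimately show "card K \<le> card (\<Union>i\<in>K. Sigma (A i) (\<lambda>m. {..<cap m}))"
      using hall[OF \<open>K \<subseteq> I\<close>] by (simp add: card_SigmaI)
  qed (use assms(1,2) in auto)
  then obtain f where f: "inj_on f I" "\<forall>i\<in>I. f i \<in> Sigma (A i) (\<lambda>m. {..<cap m})"
    by blast
  have "card {i\<in>I. fst (f i) = m} \<le> cap m" for m
  proof -
    have "inj_on (snd \<circ> f) {i\<in>I. fst (f i) = m}"
      using f(1) by (auto simp: inj_on_def prod_eq_iff)
    moreover have "(snd \<circ> f) ` {i\<in>I. fst (f i) = m} \<subseteq> {..<cap m}"
      using f(2) by auto
    ultimately show ?thesis
      using card_inj_on_le[of "snd \<circ> f" "{i\<in>I. fst (f i) = m}" "{..<cap m}"] by simp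
  qed
  then show ?thesis
    using f(2) by (intro exI[of _ "fst \<circ> f"]) auto
qed

section \<open>Eulerian orientations\<close>

lemma orientation_reduction:
  fixes s t :: "'i \<Rightarrow> 'v"
  assumes fin: "finite I" and "i0 \<in> I" "s i0 \<noteq> t i0"
    and even_deg: "\<And>v. even (count (image_mset s (mset_set I) + image_mset t (mset_set I)) v)"
  shows "\<exists>j J s' t'. I = insert i0 (insert j J) \<and> finite J \<and> i0 \<notin> J \<and> j \<notin> J \<and> i0 \<noteq> j \<and>
    (s j = s i0 \<or> t j = s i0) \<and> (\<forall>i\<in>J. s' i = s i \<and> t' i = t i) \<and>
    s' j = t i0 \<and> t' j = (if s j = s i0 then t j else s j) \<and>
    (\<forall>v. even (count (image_mset s' (mset_set (insert j J)) + image_mset t' (mset_set (insert j J))) v))"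
proof -
  define I' where "I' = I - {i0}"
  have I: "mset_set I = add_mset i0 (mset_set I')"
    unfolding I'_def using fin \<open>i0 \<in> I\<close> by (rule mset_set.remove)
  have "finite I'"
    unfolding I'_def using fin by simp
  have "odd (count (image_mset s (mset_set I') + image_mset t (mset_set I')) (s i0))"
    using even_deg[of "s i0"] \<open>s i0 \<noteq> t i0\<close> by (simp add: I)
  then have "s i0 \<in># image_mset s (mset_set I') + image_mset t (mset_set I')"
    by (intro count_inI) auto
  then obtain j where "j \<in> I'" and at_u: "s j = s i0 \<or> t j = s i0"
    using \<open>finite I'\<close> by auto
  define J where "J = I' - {j}"
  have "I = insert i0 (insert j J)" "i0 \<notin> J" "j \<notin> J" "i0 \<noteq> j" "finite J"
    using \<open>i0 \<in> I\<close> \<open>j \<in> I'\<close> \<open>finite I'\<close> by (auto simp: J_def I'_def)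
  define s' where "s' = s(j := t i0)"
  define t' where "t' = t(j := if s j = s i0 then t j else s j)"
  have agree: "\<forall>i\<in>J. s' i = s i \<and> t' i = t i"
    using \<open>j \<notin> J\<close> by (auto simp: s'_def t'_def)
  have new_edge: "s' j = t i0" "t' j = (if s j = s i0 then t j else s j)"
    by (simp_all add: s'_def t'_def)
  have "image_mset s' (mset_set J) = image_mset s (mset_set J)"
    "image_mset t' (mset_set J) = image_mset t (mset_set J)"
    using agree \<open>finite J\<close> by (auto intro!: image_mset_cong)
  then have "image_mset s (mset_set I) + image_mset t (mset_set I) =
      add_mset (s i0) (add_mset (s i0)
        (image_mset s' (mset_set (insert j J)) + image_mset t' (mset_set (insert j J))))"
    using at_u new_edge \<open>I = insert i0 (insert j J)\<close> \<open>i0 \<notin> J\<close> \<open>j \<notin> J\<close> \<open>i0 \<noteq> j\<close> \<open>finite J\<close>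
    by auto
  then have "even (count (image_mset s' (mset_set (insert j J)) + image_mset t' (mset_set (insert j J))) v)"
    for v
    using even_deg[of v] by (simp split: if_splits)
  with \<open>I = insert i0 (insert j J)\<close> \<open>finite J\<close> \<open>i0 \<notin> J\<close> \<open>j \<notin> J\<close> \<open>i0 \<noteq> j\<close> at_u agree new_edge
  show ?thesis
    by (intro exI[of _ j] exI[of _ J] exI[of _ s'] exI[of _ t']) simp
qed

lemma orientation_split_off:
  fixes s t s' t' :: "'i \<Rightarrow> 'v"
  assumes "finite J" "i0 \<notin> J" "j \<notin> J" "i0 \<noteq> j"
    and at_u: "s j = s i0 \<or> t j = s i0"
    and agree: "\<forall>i\<in>J. s' i = s i \<and> t' i = t i"
    and new_edge: "s' j = t i0" "t' j = (if s j = s i0 then t j else s j)"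
    and ori': "image_mset (\<lambda>i. if ori' i then s' i else t' i) (mset_set (insert j J)) =
               image_mset (\<lambda>i. if ori' i then t' i else s' i) (mset_set (insert j J))"
  shows "\<exists>ori. image_mset (\<lambda>i. if ori i then s i else t i) (mset_set (insert i0 (insert j J))) =
               image_mset (\<lambda>i. if ori i then t i else s i) (mset_set (insert i0 (insert j J)))"
proof -
  \<comment> \<open>in the reduced family edge j joins t i0 and t' j; it is routed as t i0 -- s i0 -- t' j\<close>
  define ori where "ori = ori'(i0 := \<not> ori' j, j := (ori' j \<longleftrightarrow> s j = s i0))"
  have "ori i0 = (\<not> ori' j)" "ori j = (ori' j \<longleftrightarrow> s j = s i0)"
    using \<open>i0 \<noteq> j\<close> by (simp_all add: ori_def)
  moreover have
    "image_mset (\<lambda>i. if ori i then s i else t i) (mset_set J) =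
     image_mset (\<lambda>i. if ori' i then s' i else t' i) (mset_set J)"
    "image_mset (\<lambda>i. if ori i then t i else s i) (mset_set J) =
     image_mset (\<lambda>i. if ori' i then t' i else s' i) (mset_set J)"
    using agree \<open>finite J\<close> \<open>i0 \<notin> J\<close> \<open>j \<notin> J\<close> by (auto simp: ori_def intro!: image_mset_cong)
  ultimately have tails:
    "image_mset (\<lambda>i. if ori i then s i else t i) (mset_set (insert i0 (insert j J))) =
     add_mset (s i0) (image_mset (\<lambda>i. if ori' i then s' i else t' i) (mset_set (insert j J)))"
    and heads:
    "image_mset (\<lambda>i. if ori i then t i else s i) (mset_set (insert i0 (insert j J))) =
     add_mset (s i0) (image_mset (\<lambda>i. if ori' i then t' i else s' i) (mset_set (insert j J)))"
    using at_u new_edge assms(1-4) by auto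
  show ?thesis
    by (intro exI[of _ ori]) (simp only: tails heads ori')
qed

text \<open>Edge i joins s i and t i and is directed from s i to t i iff ori i; the conclusion says that
  every vertex has as many outgoing as incoming edges.\<close>
lemma eulerian_orientation:
  fixes s t :: "'i \<Rightarrow> 'v"
  assumes "finite I"
    and "\<And>v. even (count (image_mset s (mset_set I) + image_mset t (mset_set I)) v)"
  shows "\<exists>ori. image_mset (\<lambda>i. if ori i then s i else t i) (mset_set I) =
               image_mset (\<lambda>i. if ori i then t i else s i) (mset_set I)"
  using assms
proof (induction "card I" arbitrary: I s t rule: less_induct)
  case less
  note fin = less.prems(1) and even_deg = less.prems(2)
  show ?case
  proof (cases "I = {}")
    case False
    then obtain i0 where "i0 \<in> I"
      by blast
    show ?thesis
    proof (cases "s i0 = t i0")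
      case True
      define I' where "I' = I - {i0}"
      have I: "mset_set I = add_mset i0 (mset_set I')"
        unfolding I'_def using fin \<open>i0 \<in> I\<close> by (rule mset_set.remove)
      have "card I' < card I"
        unfolding I'_def using fin \<open>i0 \<in> I\<close> by (rule card_Diff1_less)
      moreover have "finite I'"
        unfolding I'_def using fin by simp
      moreover have "even (count (image_mset s (mset_set I') + image_mset t (mset_set I')) v)" for v
        using even_deg[of v] by (simp add: I True split: if_splits)
      ultimately obtain ori where "image_mset (\<lambda>i. if ori i then s i else t i) (mset_set I') =
                                  image_mset (\<lambda>i. if ori i then t i else s i) (mset_set I')"
        using less.hyps by blast
      then show ?thesis
        by (intro exI[of _ ori]) (simp add: I True)
    next
      case False
      obtain j J s' t' where "I = insert i0 (insert j J)" "finite J" "i0 \<notin> J" "j \<notin> J" "i0 \<noteq> j"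
        and at_u: "s j = s i0 \<or> t j = s i0" and agree: "\<forall>i\<in>J. s' i = s i \<and> t' i = t i"
        and new_edge: "s' j = t i0" "t' j = (if s j = s i0 then t j else s j)"
        and "\<forall>v. even (count (image_mset s' (mset_set (insert j J)) + image_mset t' (mset_set (insert j J))) v)"
        using orientation_reduction[OF fin \<open>i0 \<in> I\<close> False even_deg] by blast
      moreover have "card (insert j J) < card I" "finite (insert j J)"
        using \<open>I = insert i0 (insert j J)\<close> \<open>finite J\<close> \<open>i0 \<notin> J\<close> \<open>i0 \<noteq> j\<close> by simp_all
      ultimately obtain ori' where
        "image_mset (\<lambda>i. if ori' i then s' i else t' i) (mset_set (insert j J)) =
         image_mset (\<lambda>i. if ori' i then t' i else s' i) (mset_set (insert j J))"
        using less.hyps by blast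
      from orientation_split_off[OF \<open>finite J\<close> \<open>i0 \<notin> J\<close> \<open>j \<notin> J\<close> \<open>i0 \<noteq> j\<close> at_u agree new_edge this]
      show ?thesis
        unfolding \<open>I = insert i0 (insert j J)\<close> .
    qed
  qed simp
qed

section \<open>Balanced splittings of coloured columns\<close>

context
  fixes W :: "'a set" and col :: "'a \<Rightarrow> 'm" and \<phi> :: "'a \<Rightarrow> 'c"
begin

text \<open>A multigraph on the columns, the colours and an extra vertex None: each v \<in> W is an edge
  Inl v between its column and its colour, and each column with an odd number of elements is joined
  to None by an edge Inr m, so that all degrees become even.\<close>

definition odd_columns :: "'m set" where
  "odd_columns = {m \<in> col ` W. odd (card {v\<in>W. col v = m})}"

definition column_colour_edges :: "('a + 'm) set" where
  "column_colour_edges = Inl ` W \<union> Inr ` odd_columns"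

definition column_end :: "'a + 'm \<Rightarrow> ('m + 'c) option" where
  "column_end = case_sum (\<lambda>v. Some (Inl (col v))) (\<lambda>m. Some (Inl m))"

definition colour_end :: "'a + 'm \<Rightarrow> ('m + 'c) option" where
  "colour_end = case_sum (\<lambda>v. Some (Inr (\<phi> v))) (\<lambda>_. None)"

lemma count_column_colour_edges:
  assumes "finite W"
  shows "count (image_mset f (mset_set column_colour_edges)) z =
           card {v\<in>W. f (Inl v) = z} + card {m\<in>odd_columns. f (Inr m) = z}"
proof -
  have "finite odd_columns"
    unfolding odd_columns_def using assms by simp
  then have "mset_set column_colour_edges = image_mset Inl (mset_set W) + image_mset Inr (mset_set odd_columns)"
    unfolding column_colour_edges_def using assms
    by (subst mset_set_Union) (auto simp: image_mset_mset_set)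
  then show ?thesis
    using assms \<open>finite odd_columns\<close> by (simp add: multiset.map_comp count_image_mset_mset_set)
qed

lemma card_odd_columns_eq:
  "card {m'\<in>odd_columns. m' = m} = (if odd (card {v\<in>W. col v = m}) then 1 else 0)"
proof -
  have "m \<in> odd_columns \<longleftrightarrow> odd (card {v\<in>W. col v = m})"
  proof (cases "m \<in> col ` W")
    case False
    then have "{v\<in>W. col v = m} = {}"
      by auto
    with False show ?thesis
      unfolding odd_columns_def by (simp only: card.empty) simp
  qed (simp add: odd_columns_def)
  then have "{m'\<in>odd_columns. m' = m} = (if odd (card {v\<in>W. col v = m}) then {m} else {})"
    by auto
  then show ?thesis
    by simp
qed

lemma even_degrees_column_colour_edges:
  assumes "finite W" and even_colours: "\<And>x. even (card {v\<in>W. \<phi> v = x})"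
  shows "even (count (image_mset column_end (mset_set column_colour_edges) +
                      image_mset colour_end (mset_set column_colour_edges)) z)"
proof (cases z)
  case None
  then show ?thesis
    using even_card_odd_fibres[OF assms, of col]
    by (simp add: count_column_colour_edges[OF \<open>finite W\<close>] column_end_def colour_end_def odd_columns_def)
next
  case (Some y)
  then show ?thesis
    using even_colours card_odd_columns_eq
    by (cases y) (simp_all add: count_column_colour_edges[OF \<open>finite W\<close>] column_end_def colour_end_def)
qed

definition balanced_orientation :: "('a + 'm \<Rightarrow> bool) \<Rightarrow> bool" where
  "balanced_orientation ori \<longleftrightarrow>
     image_mset (\<lambda>i. if ori i then column_end i else colour_end i) (mset_set column_colour_edges) =
     image_mset (\<lambda>i. if ori i then colour_end i else column_end i) (mset_set column_colour_edges)"

lemma balanced_orientation_exists: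
  assumes "finite W" and "\<And>x. even (card {v\<in>W. \<phi> v = x})"
  shows "\<exists>ori. balanced_orientation ori"
proof -
  have "finite column_colour_edges"
    unfolding column_colour_edges_def odd_columns_def using \<open>finite W\<close> by simp
  then show ?thesis
    unfolding balanced_orientation_def
    using eulerian_orientation even_degrees_column_colour_edges[OF assms] by blast
qed

lemma balanced_orientation_colours:
  assumes "finite W" and "balanced_orientation ori"
  shows "image_mset \<phi> (mset_set {v\<in>W. ori (Inl v)}) = image_mset \<phi> (mset_set {v\<in>W. \<not> ori (Inl v)})"
proof (rule multiset_eqI)
  fix x
  \<comment> \<open>compare the in- and out-degree of the colour vertex x\<close>
  have "count (image_mset (\<lambda>i. if ori i then column_end i else colour_end i) (mset_set column_colour_edges))
          (Some (Inr x)) = card {v\<in>W. \<not> ori (Inl v) \<and> \<phi> v = x}"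
       "count (image_mset (\<lambda>i. if ori i then colour_end i else column_end i) (mset_set column_colour_edges))
          (Some (Inr x)) = card {v\<in>W. ori (Inl v) \<and> \<phi> v = x}"
    by (auto simp: count_column_colour_edges[OF \<open>finite W\<close>] column_end_def colour_end_def
        intro!: arg_cong[where f = card])
  then have "card {v\<in>W. ori (Inl v) \<and> \<phi> v = x} = card {v\<in>W. \<not> ori (Inl v) \<and> \<phi> v = x}"
    using assms(2) unfolding balanced_orientation_def by metis
  moreover have "{v\<in>{v\<in>W. ori (Inl v)}. \<phi> v = x} = {v\<in>W. ori (Inl v) \<and> \<phi> v = x}"
    "{v\<in>{v\<in>W. \<not> ori (Inl v)}. \<phi> v = x} = {v\<in>W. \<not> ori (Inl v) \<and> \<phi> v = x}"
    by blast+
  moreover have "finite {v\<in>W. ori (Inl v)}" "finite {v\<in>W. \<not> ori (Inl v)}"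
    using \<open>finite W\<close> by simp_all
  ultimately show "count (image_mset \<phi> (mset_set {v\<in>W. ori (Inl v)})) x =
             count (image_mset \<phi> (mset_set {v\<in>W. \<not> ori (Inl v)})) x"
    by (simp only: count_image_mset_mset_set)
qed

lemma balanced_orientation_columns:
  assumes "finite W" and "balanced_orientation ori"
    and two_per_column: "2 \<le> card {u\<in>W. col u = m}"
  shows "\<exists>a\<in>W. ori (Inl a) \<and> col a = m" "\<exists>b\<in>W. \<not> ori (Inl b) \<and> col b = m"
proof -
  \<comment> \<open>compare the in- and out-degree of the column vertex m, which has at most one edge to None\<close>
  define p where "p = card {u\<in>W. ori (Inl u) \<and> col u = m}"
  define q where "q = card {u\<in>W. \<not> ori (Inl u) \<and> col u = m}"
  have "{u\<in>W. col u = m} = {u\<in>W. ori (Inl u) \<and> col u = m} \<union> {u\<in>W. \<not> ori (Inl u) \<and> col u = m}"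
    by blast
  then have "2 \<le> p + q"
    using two_per_column \<open>finite W\<close> unfolding p_def q_def by (simp add: card_Un_disjoint disjoint_iff)
  have single: "card {m'\<in>odd_columns. P m' \<and> m' = m} \<le> 1" for P
    using card_mono[of "{m}" "{m'\<in>odd_columns. P m' \<and> m' = m}"] by fastforce
  have "count (image_mset (\<lambda>i. if ori i then column_end i else colour_end i) (mset_set column_colour_edges))
          (Some (Inl m)) = p + card {m'\<in>odd_columns. ori (Inr m') \<and> m' = m}"
       "count (image_mset (\<lambda>i. if ori i then colour_end i else column_end i) (mset_set column_colour_edges))
          (Some (Inl m)) = q + card {m'\<in>odd_columns. \<not> ori (Inr m') \<and> m' = m}"
    unfolding p_def q_def
    by (auto simp: count_column_colour_edges[OF \<open>finite W\<close>] column_end_def colour_end_def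
        intro!: arg_cong2[where f = "(+)"] arg_cong[where f = card])
  then have "p + card {m'\<in>odd_columns. ori (Inr m') \<and> m' = m} =
             q + card {m'\<in>odd_columns. \<not> ori (Inr m') \<and> m' = m}"
    using assms(2) unfolding balanced_orientation_def by metis
  then have "0 < p" "0 < q"
    using \<open>2 \<le> p + q\<close> single[of "\<lambda>m'. ori (Inr m')"] single[of "\<lambda>m'. \<not> ori (Inr m')"] by linarith+
  then show "\<exists>a\<in>W. ori (Inl a) \<and> col a = m" "\<exists>b\<in>W. \<not> ori (Inl b) \<and> col b = m"
    unfolding p_def q_def by (auto simp: card_gt_0_iff)
qed

lemma balanced_split:
  assumes "finite W"
    and even_colours: "\<And>x. even (card {v\<in>W. \<phi> v = x})"
    and two_per_column: "\<And>v. v \<in> W \<Longrightarrow> 2 \<le> card {u\<in>W. col u = col v}"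
  shows "\<exists>A\<subseteq>W. image_mset \<phi> (mset_set A) = image_mset \<phi> (mset_set (W - A)) \<and>
           (\<forall>v\<in>W. (\<exists>a\<in>A. col a = col v) \<and> (\<exists>b\<in>W - A. col b = col v))"
proof -
  obtain ori where ori: "balanced_orientation ori"
    using balanced_orientation_exists[OF assms(1,2)] by blast
  have "W - {v\<in>W. ori (Inl v)} = {v\<in>W. \<not> ori (Inl v)}"
    by blast
  moreover have "(\<exists>a\<in>{v\<in>W. ori (Inl v)}. col a = col v) \<and> (\<exists>b\<in>{v\<in>W. \<not> ori (Inl v)}. col b = col v)"
    if "v \<in> W" for v
    using balanced_orientation_columns[OF \<open>finite W\<close> ori two_per_column[OF that]] by auto
  ultimately show ?thesis
    using balanced_orientation_colours[OF \<open>finite W\<close> ori]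
    by (intro exI[of _ "{v\<in>W. ori (Inl v)}"]) auto
qed

end

context
  fixes R :: "'a set" and col :: "'a \<Rightarrow> 'm" and \<phi> :: "'a \<Rightarrow> 'c"
begin

definition odd_colours :: "'c set" where
  "odd_colours = {x \<in> \<phi> ` R. odd (card {v\<in>R. \<phi> v = x})}"

text \<open>For every colour x with a class of odd size, g x is the column from which one vertex of colour x
  is deleted.\<close>
definition deleted_vertices :: "('c \<Rightarrow> 'm) \<Rightarrow> 'a set" where
  "deleted_vertices g = {v\<in>R. \<phi> v \<in> odd_colours \<and> g (\<phi> v) = col v}"

lemma odd_colours_hall_condition:
  assumes "finite R"
    and three_per_column: "\<And>v. v \<in> R \<Longrightarrow> 3 \<le> card {u\<in>R. col u = col v}"
    and K: "\<And>x. x \<in> K \<Longrightarrow> 3 \<le> card {v\<in>R. \<phi> v = x}"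
  shows "card K \<le> (\<Sum>m\<in>(\<Union>x\<in>K. col ` {v\<in>R. \<phi> v = x}). card {v\<in>R. col v = m} - 2)"
proof -
  define RK where "RK = {v\<in>R. \<phi> v \<in> K}"
  have "finite RK"
    unfolding RK_def using \<open>finite R\<close> by simp
  have "K \<subseteq> \<phi> ` RK"
  proof
    fix x
    assume "x \<in> K"
    then have "{v\<in>R. \<phi> v = x} \<noteq> {}"
      using K[of x] by (metis card.empty not_numeral_le_zero)
    then show "x \<in> \<phi> ` RK"
      using \<open>x \<in> K\<close> by (auto simp: RK_def)
  qed
  then have "K = \<phi> ` RK"
    by (auto simp: RK_def)
  have cols: "(\<Union>x\<in>K. col ` {v\<in>R. \<phi> v = x}) = col ` RK"
    unfolding RK_def by blast
  have "3 * card K = (\<Sum>x\<in>K. 3)"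
    by simp
  also have "\<dots> \<le> (\<Sum>x\<in>K. card {v\<in>RK. \<phi> v = x})"
  proof (rule sum_mono)
    fix x
    assume "x \<in> K"
    then have "{v\<in>RK. \<phi> v = x} = {v\<in>R. \<phi> v = x}"
      by (auto simp: RK_def)
    then show "3 \<le> card {v\<in>RK. \<phi> v = x}"
      using K[OF \<open>x \<in> K\<close>] by simp
  qed
  also have "\<dots> = card RK"
    using \<open>finite RK\<close> unfolding \<open>K = \<phi> ` RK\<close> by (simp flip: card_eq_sum_card_fibres)
  also have "\<dots> = (\<Sum>m\<in>col ` RK. card {v\<in>RK. col v = m})"
    using \<open>finite RK\<close> by (rule card_eq_sum_card_fibres)
  also have "\<dots> \<le> (\<Sum>m\<in>col ` RK. 3 * (card {v\<in>R. col v = m} - 2))"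
  proof (rule sum_mono)
    fix m
    assume "m \<in> col ` RK"
    then have "3 \<le> card {v\<in>R. col v = m}"
      using three_per_column by (auto simp: RK_def)
    moreover have "card {v\<in>RK. col v = m} \<le> card {v\<in>R. col v = m}"
      using \<open>finite R\<close> by (intro card_mono) (auto simp: RK_def)
    ultimately show "card {v\<in>RK. col v = m} \<le> 3 * (card {v\<in>R. col v = m} - 2)"
      by linarith
  qed
  finally show ?thesis
    unfolding cols by (simp flip: sum_distrib_left)
qed

lemma exists_column_choice:
  assumes "finite R"
    and repeated: "\<And>v. v \<in> R \<Longrightarrow> 2 \<le> card {u\<in>R. \<phi> u = \<phi> v}"
    and three_per_column: "\<And>v. v \<in> R \<Longrightarrow> 3 \<le> card {u\<in>R. col u = col v}"
  shows "\<exists>g. (\<forall>x\<in>odd_colours. g x \<in> col ` {v\<in>R. \<phi> v = x}) \<and>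
           (\<forall>m. card {x\<in>odd_colours. g x = m} \<le> card {v\<in>R. col v = m} - 2)"
proof (rule Hall_capacitated)
  show "finite odd_colours"
    unfolding odd_colours_def using \<open>finite R\<close> by simp
  show "finite (col ` {v\<in>R. \<phi> v = x})" for x
    using \<open>finite R\<close> by simp
  have "3 \<le> card {v\<in>R. \<phi> v = x}" if "x \<in> odd_colours" for x
  proof -
    obtain v where "v \<in> R" "x = \<phi> v" "odd (card {v\<in>R. \<phi> v = x})"
      using \<open>x \<in> odd_colours\<close> unfolding odd_colours_def by blast
    then show ?thesis
      using repeated[of v] by presburger
  qed
  then show "card K \<le> (\<Sum>m\<in>(\<Union>x\<in>K. col ` {v\<in>R. \<phi> v = x}). card {v\<in>R. col v = m} - 2)"
    if "K \<subseteq> odd_colours" for K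
    using odd_colours_hall_condition[OF \<open>finite R\<close> three_per_column, of K] that by blast
qed

lemma even_colour_classes_Diff_deleted:
  assumes "finite R"
    and inj: "\<And>m. inj_on \<phi> {v\<in>R. col v = m}"
    and g: "\<forall>x\<in>odd_colours. g x \<in> col ` {v\<in>R. \<phi> v = x}"
  shows "even (card {v\<in>R - deleted_vertices g. \<phi> v = x})"
proof (cases "x \<in> odd_colours")
  case True
  then obtain v0 where "v0 \<in> R" "\<phi> v0 = x" "col v0 = g x"
    using g by force
  then have "{v\<in>deleted_vertices g. \<phi> v = x} = {v0}"
    using inj[of "g x"] True by (auto simp: deleted_vertices_def inj_on_def)
  then have "{v\<in>R - deleted_vertices g. \<phi> v = x} = {v\<in>R. \<phi> v = x} - {v0}"
    by blast
  then show ?thesis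
    using True \<open>finite R\<close> \<open>v0 \<in> R\<close> \<open>\<phi> v0 = x\<close> by (auto simp: odd_colours_def)
next
  case False
  then have "{v\<in>R - deleted_vertices g. \<phi> v = x} = {v\<in>R. \<phi> v = x}"
    by (auto simp: deleted_vertices_def)
  moreover have "even (card {v\<in>R. \<phi> v = x})"
  proof (cases "x \<in> \<phi> ` R")
    case False
    then have "{v\<in>R. \<phi> v = x} = {}"
      by auto
    then show ?thesis
      by (metis card.empty dvd_0_right)
  qed (use False in \<open>simp add: odd_colours_def\<close>)
  ultimately show ?thesis
    by simp
qed

lemma two_per_column_Diff_deleted:
  assumes "finite R"
    and inj: "\<And>m. inj_on \<phi> {v\<in>R. col v = m}"
    and g: "\<forall>m. card {x\<in>odd_colours. g x = m} \<le> card {v\<in>R. col v = m} - 2"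
    and three_per_column: "3 \<le> card {u\<in>R. col u = m}"
  shows "2 \<le> card {u\<in>R - deleted_vertices g. col u = m}"
proof -
  let ?D = "{u\<in>deleted_vertices g. col u = m}"
  have "inj_on \<phi> ?D" "\<phi> ` ?D \<subseteq> {x\<in>odd_colours. g x = m}"
    using inj[of m] by (auto simp: deleted_vertices_def intro: inj_on_subset)
  moreover have "finite {x\<in>odd_colours. g x = m}"
    unfolding odd_colours_def using \<open>finite R\<close> by simp
  ultimately have "card ?D \<le> card {x\<in>odd_colours. g x = m}"
    by (rule card_inj_on_le)
  then have "card ?D \<le> card {u\<in>R. col u = m} - 2"
    using g le_trans by blast
  moreover have "card {u\<in>R - deleted_vertices g. col u = m} = card {u\<in>R. col u = m} - card ?D"
  proof -
    have "{u\<in>R - deleted_vertices g. col u = m} = {u\<in>R. col u = m} - ?D"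
      by blast
    then show ?thesis
      using \<open>finite R\<close> by (simp only:) (intro card_Diff_subset; auto simp: deleted_vertices_def)
  qed
  ultimately show ?thesis
    using three_per_column by linarith
qed

lemma exists_even_colour_classes_subset:
  assumes "finite R"
    and inj: "\<And>m. inj_on \<phi> {v\<in>R. col v = m}"
    and repeated: "\<And>v. v \<in> R \<Longrightarrow> 2 \<le> card {u\<in>R. \<phi> u = \<phi> v}"
    and three_per_column: "\<And>v. v \<in> R \<Longrightarrow> 3 \<le> card {u\<in>R. col u = col v}"
  shows "\<exists>W\<subseteq>R. (\<forall>x. even (card {v\<in>W. \<phi> v = x})) \<and> (\<forall>v\<in>R. 2 \<le> card {u\<in>W. col u = col v})"
proof -
  obtain g where "\<forall>x\<in>odd_colours. g x \<in> col ` {v\<in>R. \<phi> v = x}"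
    and "\<forall>m. card {x\<in>odd_colours. g x = m} \<le> card {v\<in>R. col v = m} - 2"
    using exists_column_choice[OF assms(1) repeated three_per_column] by blast
  then show ?thesis
    using even_colour_classes_Diff_deleted[OF assms(1) inj] two_per_column_Diff_deleted[OF assms(1) inj]
      three_per_column
    by (intro exI[of _ "R - deleted_vertices g"]) auto
qed

end

lemma distinct_not_anagram:
  assumes "distinct s" "2 \<le> length s"
  shows "\<not> anagram s"
proof
  assume "anagram s"
  then have "set (take (length s div 2) s) = set (drop (length s div 2) s)"
    unfolding anagram_def by (metis set_mset_mset)
  moreover have "set (take (length s div 2) s) \<inter> set (drop (length s div 2) s) = {}"
    using assms(1) by (rule set_take_disj_set_drop_if_distinct) simp
  moreover have "take (length s div 2) s \<noteq> []"
    using assms(2) by auto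
  ultimately show False
    by simp
qed

lemma injective_colouring_anagram_free:
  assumes "inj_on \<phi> V" "\<phi> ` V \<subseteq> {1..c}"
  shows "anagram_free_colouring V E \<phi> c"
  unfolding anagram_free_colouring_def
proof (intro conjI allI impI)
  fix xs
  assume "is_path V E xs \<and> even (length xs) \<and> 2 \<le> length xs"
  then have "distinct (map \<phi> xs)" "2 \<le> length (map \<phi> xs)"
    using assms(1) by (auto simp: is_path_def distinct_map intro: inj_on_subset)
  then show "\<not> anagram (map \<phi> xs)"
    by (rule distinct_not_anagram)
qed (rule assms(2))

lemma anagram_free_colouring_adj:
  assumes "sgraph V E" "anagram_free_colouring V E \<phi> c" "E u v"
  shows "\<phi> u \<noteq> \<phi> v"
proof
  assume "\<phi> u = \<phi> v"
  moreover have "is_path V E [u, v]"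
    using assms(1,3) unfolding sgraph_def is_path_def by (auto simp: less_Suc_eq)
  ultimately show False
    using assms(2) unfolding anagram_free_colouring_def anagram_def by fastforce
qed

section \<open>The blown-up path\<close>

text \<open>Vertex v of the blown-up path lies in block v div k; two distinct vertices are adjacent iff
  their blocks are equal or consecutive, i.e. the graph is the lexicographic product of the path
  P_n with the complete graph K_k.\<close>

definition near_blocks :: "nat \<Rightarrow> nat \<Rightarrow> nat \<Rightarrow> bool" where
  "near_blocks k u v \<longleftrightarrow> u div k \<le> Suc (v div k) \<and> v div k \<le> Suc (u div k)"

definition path_blowup_vertices :: "nat \<Rightarrow> nat \<Rightarrow> nat set" where
  "path_blowup_vertices k n = {..<k * n}"

definition path_blowup_adj :: "nat \<Rightarrow> nat \<Rightarrow> nat \<Rightarrow> nat \<Rightarrow> bool" where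
  "path_blowup_adj k n u v \<longleftrightarrow> u < k * n \<and> v < k * n \<and> u \<noteq> v \<and> near_blocks k u v"

definition blocks :: "nat \<Rightarrow> nat \<Rightarrow> nat \<Rightarrow> nat set" where
  "blocks k a b = {v. a \<le> v div k \<and> v div k < b}"

lemma blocks_eq_atLeastLessThan:
  assumes "0 < k"
  shows "blocks k a b = {a * k..<b * k}"
proof -
  have "a \<le> v div k \<longleftrightarrow> a * k \<le> v" for a v
    using div_less_iff_less_mult[OF assms, of v a] by linarith
  then show ?thesis
    by (auto simp: blocks_def div_less_iff_less_mult[OF assms])
qed

lemma card_blocks: "0 < k \<Longrightarrow> card (blocks k a b) = (b - a) * k"
  by (simp add: blocks_eq_atLeastLessThan diff_mult_distrib)

lemma finite_blocks: "0 < k \<Longrightarrow> finite (blocks k a b)"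
  by (simp add: blocks_eq_atLeastLessThan)

lemma sgraph_path_blowup: "sgraph (path_blowup_vertices k n) (path_blowup_adj k n)"
  by (auto simp: sgraph_def path_blowup_vertices_def path_blowup_adj_def near_blocks_def)

lemma card_path_blowup_vertices: "card (path_blowup_vertices k n) = k * n"
  by (simp add: path_blowup_vertices_def)

lemma path_blowup_vertices_eq_blocks: "0 < k \<Longrightarrow> path_blowup_vertices k n = blocks k 0 n"
  by (auto simp: path_blowup_vertices_def blocks_eq_atLeastLessThan mult.commute)

lemma degree_path_blowup:
  assumes "0 < k"
  shows "degree (path_blowup_adj k n) v \<le> 3 * k - 1"
proof -
  define m where "m = v div k"
  have "{u. path_blowup_adj k n v u} \<subseteq> blocks k (m - 1) (m + 2) - {v}"
    by (auto simp: path_blowup_adj_def near_blocks_def blocks_def m_def)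
  moreover have "v \<in> blocks k (m - 1) (m + 2)"
    by (simp add: blocks_def m_def)
  ultimately have "degree (path_blowup_adj k n) v \<le> (m + 2 - (m - 1)) * k - 1"
    unfolding degree_def using assms
    by (metis card_Diff_singleton card_blocks card_mono finite_Diff finite_blocks)
  also have "\<dots> \<le> 3 * k - 1"
    by (intro diff_le_mono mult_le_mono1) linarith
  finally show ?thesis .
qed

lemma max_degree_path_blowup:
  "0 < k \<Longrightarrow> max_degree (path_blowup_vertices k n) (path_blowup_adj k n) \<le> 3 * k - 1"
  using degree_path_blowup[of k n] by (simp add: max_degree_def path_blowup_vertices_def)

lemma pathwidth_path_blowup:
  assumes "0 < k"
  shows "pathwidth (path_blowup_vertices k n) (path_blowup_adj k n) \<le> 2 * k - 1"
proof -
  define Bs where "Bs = map (\<lambda>i. blocks k i (min (i + 2) n)) [0..<n]"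
  have "path_decomposition (path_blowup_vertices k n) (path_blowup_adj k n) Bs"
    unfolding path_decomposition_def
  proof (intro conjI allI ballI impI)
    show "B \<subseteq> path_blowup_vertices k n" if "B \<in> set Bs" for B
      using that assms by (auto simp: Bs_def path_blowup_vertices_eq_blocks blocks_def)
    show "\<exists>B\<in>set Bs. v \<in> B" if "v \<in> path_blowup_vertices k n" for v
      using that assms by (auto simp: Bs_def path_blowup_vertices_eq_blocks blocks_def intro!: bexI[of _ "v div k"])
    show "\<exists>B\<in>set Bs. u \<in> B \<and> v \<in> B" if "path_blowup_adj k n u v" for u v
    proof -
      have "u div k < n" "v div k < n" "near_blocks k u v"
        using that by (auto simp: path_blowup_adj_def mult.commute intro: less_mult_imp_div_less)
      then show ?thesis
        by (auto simp: Bs_def near_blocks_def blocks_def intro!: bexI[of _ "min (u div k) (v div k)"])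
    qed
    show "v \<in> Bs ! j" if "i \<le> j \<and> j \<le> l \<and> l < length Bs \<and> v \<in> Bs ! i \<and> v \<in> Bs ! l" for v i j l
      using that by (auto simp: Bs_def blocks_def)
  qed
  moreover have "card B \<le> 2 * k - 1 + 1" if "B \<in> set Bs" for B
    using that assms by (auto simp: Bs_def card_blocks)
  ultimately show ?thesis
    unfolding pathwidth_def by (intro Least_le) blast
qed

lemma anagram_free_colouring_inj_on_block:
  assumes "0 < k" "anagram_free_colouring (path_blowup_vertices k n) (path_blowup_adj k n) \<phi> c"
    and "m < n"
  shows "inj_on \<phi> {v. v div k = m}"
proof (rule inj_onI)
  fix u v
  assume "u \<in> {v. v div k = m}" "v \<in> {v. v div k = m}" "\<phi> u = \<phi> v"
  moreover have "w < k * n" if "w div k = m" for w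
    using that \<open>m < n\<close> div_less_iff_less_mult[OF \<open>0 < k\<close>, of w n] by (simp add: mult.commute)
  ultimately show "u = v"
    using anagram_free_colouring_adj[OF sgraph_path_blowup assms(2), of u v]
    by (auto simp: path_blowup_adj_def near_blocks_def)
qed

lemma is_path_path_blowupI:
  assumes "xs \<noteq> []" "distinct xs" "set xs \<subseteq> path_blowup_vertices k n"
    and "successively (near_blocks k) xs"
  shows "is_path (path_blowup_vertices k n) (path_blowup_adj k n) xs"
  unfolding is_path_def path_blowup_adj_def
proof (intro conjI allI impI assms(1-3))
  fix i
  assume "Suc i < length xs"
  moreover have "xs ! i \<in> path_blowup_vertices k n" "xs ! Suc i \<in> path_blowup_vertices k n"
    using assms(3) nth_mem[of i xs] nth_mem[of "Suc i" xs] \<open>Suc i < length xs\<close> by auto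
  ultimately show "xs ! i < k * n" "xs ! Suc i < k * n" "xs ! i \<noteq> xs ! Suc i" "near_blocks k (xs ! i) (xs ! Suc i)"
    using assms(2-4) by (auto simp: path_blowup_vertices_def nth_eq_iff_index_eq successively_nth)
qed

lemma less_of_div_less: "u div k < v div k \<Longrightarrow> u < (v :: nat)"
  by (metis div_le_mono not_le)

lemma sorted_nth_less_imp_less:
  assumes "sorted xs" "i < length xs" "xs ! i < xs ! j"
  shows "i < j"
  using sorted_nth_mono[OF assms(1), of j i] assms(2,3) by fastforce

lemma last_sorted_list_of_set_ge:
  assumes "finite A" "v \<in> A"
  shows "v \<le> last (sorted_list_of_set A)"
proof -
  define xs where "xs = sorted_list_of_set A"
  obtain j where "j < length xs" "xs ! j = v"
    using assms unfolding xs_def by (metis in_set_conv_nth set_sorted_list_of_set)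
  moreover have "last xs = xs ! (length xs - 1)"
    using \<open>j < length xs\<close> by (intro last_conv_nth) auto
  ultimately show ?thesis
    unfolding xs_def[symmetric] using sorted_nth_mono[of xs j "length xs - 1"]
    by (simp add: xs_def)
qed

text \<open>Since v div k is monotone in v, increasing order visits the blocks from left to right.\<close>
lemma successively_near_blocks_sorted_list_of_set:
  assumes "finite X" "X \<subseteq> blocks k a b" "\<And>m. a \<le> m \<Longrightarrow> m < b \<Longrightarrow> \<exists>v\<in>X. v div k = m"
  shows "successively (near_blocks k) (sorted_list_of_set X)"
  unfolding successively_conv_nth
proof (intro allI impI)
  fix i
  define xs where "xs = sorted_list_of_set X"
  assume "Suc i < length (sorted_list_of_set X)"
  then have i: "Suc i < length xs"
    unfolding xs_def .
  have "sorted xs" "set xs = X"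
    unfolding xs_def using assms(1) by simp_all
  have "xs ! i < xs ! Suc i"
    using i strict_sorted_list_of_set[of X] unfolding xs_def[symmetric] by (simp add: sorted_wrt_iff_nth_less)
  then have le: "xs ! i div k \<le> xs ! Suc i div k"
    by (simp add: div_le_mono)
  have "xs ! Suc i div k \<le> Suc (xs ! i div k)"
  proof (rule ccontr)
    assume gap: "\<not> ?thesis"
    have "xs ! i \<in> X" "xs ! Suc i \<in> X"
      using i \<open>set xs = X\<close> nth_mem[of i xs] nth_mem[of "Suc i" xs] by auto
    then obtain j where j: "j < length xs" "xs ! j div k = Suc (xs ! i div k)"
      using assms(2) assms(3)[of "Suc (xs ! i div k)"] gap \<open>set xs = X\<close>
      by (force simp: blocks_def in_set_conv_nth)
    have "xs ! i < xs ! j"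
      by (rule less_of_div_less[where k = k]) (simp add: j(2))
    moreover have "xs ! j < xs ! Suc i"
      by (rule less_of_div_less[where k = k]) (use gap j(2) in simp)
    ultimately have "i < j" "j < Suc i"
      using sorted_nth_less_imp_less[OF \<open>sorted xs\<close>] \<open>j < length xs\<close> i by simp_all
    then show False
      by simp
  qed
  with le show "near_blocks k (sorted_list_of_set X ! i) (sorted_list_of_set X ! Suc i)"
    unfolding near_blocks_def xs_def by simp
qed

lemma last_sorted_list_of_set_in_last_block:
  assumes "finite A" "A \<subseteq> blocks k a b" "v \<in> A" "v div k = b - 1"
  shows "last (sorted_list_of_set A) div k = b - 1"
proof -
  have "last (sorted_list_of_set A) \<in> A"
    using assms(1,3) by (metis empty_iff last_in_set set_empty set_sorted_list_of_set)
  then have "last (sorted_list_of_set A) div k < b"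
    using assms(2) by (auto simp: blocks_def)
  moreover have "v div k \<le> last (sorted_list_of_set A) div k"
    using last_sorted_list_of_set_ge[OF assms(1,3)] by (rule div_le_mono)
  ultimately show ?thesis
    using assms(4) by linarith
qed

lemma successively_near_blocks_zigzag:
  assumes "finite A" "finite B" "a < b" "A \<subseteq> blocks k a b" "B \<subseteq> blocks k a b"
    and meets: "\<And>m. a \<le> m \<Longrightarrow> m < b \<Longrightarrow> (\<exists>v\<in>A. v div k = m) \<and> (\<exists>v\<in>B. v div k = m)"
  shows "successively (near_blocks k) (sorted_list_of_set A @ rev (sorted_list_of_set B))"
proof -
  have "a \<le> b - 1" "b - 1 < b"
    using \<open>a < b\<close> by simp_all
  then obtain v w where "v \<in> A" "v div k = b - 1" "w \<in> B" "w div k = b - 1"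
    using meets by blast
  have "successively (near_blocks k) (sorted_list_of_set A)"
    using \<open>finite A\<close> assms(4) by (rule successively_near_blocks_sorted_list_of_set) (use meets in blast)
  moreover have "successively (near_blocks k) (sorted_list_of_set B)"
    using \<open>finite B\<close> assms(5) by (rule successively_near_blocks_sorted_list_of_set) (use meets in blast)
  moreover have "near_blocks k (last (sorted_list_of_set A)) (last (sorted_list_of_set B))"
    using last_sorted_list_of_set_in_last_block[OF \<open>finite A\<close> assms(4) \<open>v \<in> A\<close> \<open>v div k = b - 1\<close>]
      last_sorted_list_of_set_in_last_block[OF \<open>finite B\<close> assms(5) \<open>w \<in> B\<close> \<open>w div k = b - 1\<close>]
    by (simp add: near_blocks_def)
  moreover have "sorted_list_of_set B \<noteq> []"
    using \<open>w \<in> B\<close> \<open>finite B\<close> by auto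
  ultimately show ?thesis
    by (auto simp: successively_append_iff near_blocks_def conj_commute hd_rev)
qed

text \<open>The path runs through A from left to right, block by block, and returns through B from right
  to left; its colour word is an anagram because A and B carry the same multiset of colours.\<close>
lemma balanced_blocks_not_anagram_free:
  assumes "0 < k" "a < b" "b \<le> n" "A \<inter> B = {}" "A \<subseteq> blocks k a b" "B \<subseteq> blocks k a b"
    and meets: "\<And>m. a \<le> m \<Longrightarrow> m < b \<Longrightarrow> (\<exists>v\<in>A. v div k = m) \<and> (\<exists>v\<in>B. v div k = m)"
    and balanced: "image_mset \<phi> (mset_set A) = image_mset \<phi> (mset_set B)"
  shows "\<not> anagram_free_colouring (path_blowup_vertices k n) (path_blowup_adj k n) \<phi> c"
proof
  assume afc: "anagram_free_colouring (path_blowup_vertices k n) (path_blowup_adj k n) \<phi> c"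
  have "finite A" "finite B"
    using assms(5,6) finite_blocks[OF \<open>0 < k\<close>] by (auto intro: finite_subset)
  define xs where "xs = sorted_list_of_set A"
  define ys where "ys = rev (sorted_list_of_set B)"
  have "set xs = A" "set ys = B" "distinct xs" "distinct ys"
    unfolding xs_def ys_def using \<open>finite A\<close> \<open>finite B\<close> by simp_all
  then have "mset (map \<phi> xs) = mset (map \<phi> ys)"
    using balanced by (simp flip: mset_set_set)
  then have "length xs = length ys"
    by (metis length_map size_mset)
  obtain v where "v \<in> A"
    using meets[of a] \<open>a < b\<close> by blast
  then have "xs \<noteq> []"
    using \<open>set xs = A\<close> by auto
  have "successively (near_blocks k) (xs @ ys)"
    unfolding xs_def ys_def using \<open>finite A\<close> \<open>finite B\<close> \<open>a < b\<close> assms(5,6) meets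
    by (rule successively_near_blocks_zigzag)
  moreover have "set (xs @ ys) \<subseteq> path_blowup_vertices k n"
    using assms(3,5,6) \<open>0 < k\<close> \<open>set xs = A\<close> \<open>set ys = B\<close>
    by (auto simp: path_blowup_vertices_eq_blocks blocks_def)
  ultimately have "is_path (path_blowup_vertices k n) (path_blowup_adj k n) (xs @ ys)"
    using \<open>xs \<noteq> []\<close> \<open>distinct xs\<close> \<open>distinct ys\<close> \<open>set xs = A\<close> \<open>set ys = B\<close> assms(4)
    by (intro is_path_path_blowupI) auto
  moreover have "anagram (map \<phi> (xs @ ys))"
    unfolding anagram_def using \<open>length xs = length ys\<close> \<open>mset (map \<phi> xs) = mset (map \<phi> ys)\<close>
    by simp
  moreover have "even (length (xs @ ys))"
    using \<open>length xs = length ys\<close> by simp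
  moreover have "1 \<le> length xs"
    using \<open>xs \<noteq> []\<close> by (cases xs) auto
  then have "2 \<le> length (xs @ ys)"
    using \<open>length xs = length ys\<close> unfolding length_append by linarith
  ultimately show False
    using afc unfolding anagram_free_colouring_def by blast
qed

section \<open>The lower bound\<close>

lemma card_block:
  assumes "0 < k"
  shows "card {v. v div k = m} = k"
proof -
  have "{v. v div k = m} = blocks k m (Suc m)"
    by (auto simp: blocks_def)
  then show ?thesis
    using card_blocks[OF assms] by simp
qed

definition unique_colour_vertices :: "nat \<Rightarrow> nat \<Rightarrow> nat \<Rightarrow> (nat \<Rightarrow> 'c) \<Rightarrow> nat \<Rightarrow> nat set" where
  "unique_colour_vertices k a b \<phi> m = {v. v div k = m \<and> (\<forall>u\<in>blocks k a b. \<phi> u = \<phi> v \<longrightarrow> u = v)}"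

definition repeated_colour_vertices :: "nat \<Rightarrow> nat \<Rightarrow> nat \<Rightarrow> (nat \<Rightarrow> 'c) \<Rightarrow> nat set" where
  "repeated_colour_vertices k a b \<phi> = {v\<in>blocks k a b. \<exists>u\<in>blocks k a b. u \<noteq> v \<and> \<phi> u = \<phi> v}"

lemma finite_repeated_colour_vertices: "0 < k \<Longrightarrow> finite (repeated_colour_vertices k a b \<phi>)"
  unfolding repeated_colour_vertices_def using finite_blocks by simp

lemma card_block_le_unique_plus_repeated:
  assumes "0 < k" "a \<le> m" "m < b"
  shows "k \<le> card (unique_colour_vertices k a b \<phi> m) +
              card {u\<in>repeated_colour_vertices k a b \<phi>. u div k = m}"
proof -
  let ?U = "unique_colour_vertices k a b \<phi> m" and ?R = "{u\<in>repeated_colour_vertices k a b \<phi>. u div k = m}"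
  have "{v. v div k = m} \<subseteq> ?U \<union> ?R"
  proof
    fix v
    assume "v \<in> {v. v div k = m}"
    then have "v div k = m" "v \<in> blocks k a b"
      using assms(2,3) by (simp_all add: blocks_def)
    then show "v \<in> ?U \<union> ?R"
      unfolding unique_colour_vertices_def repeated_colour_vertices_def by blast
  qed
  moreover have "finite (?U \<union> ?R)"
    using finite_repeated_colour_vertices[OF assms(1)] finite_blocks[OF assms(1), of m "Suc m"]
    by (auto simp: blocks_def unique_colour_vertices_def elim: finite_subset[rotated])
  ultimately have "card {v. v div k = m} \<le> card (?U \<union> ?R)"
    by (rule card_mono[rotated])
  also have "\<dots> \<le> card ?U + card ?R"
    by (rule card_Un_le)
  finally show ?thesis
    using card_block[OF assms(1), of m] by simp
qed

lemma exists_even_colour_classes_repeated: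
  assumes "0 < k" and afc: "anagram_free_colouring (path_blowup_vertices k n) (path_blowup_adj k n) \<phi> c"
    and "b \<le> n"
    and three: "\<And>m. a \<le> m \<Longrightarrow> m < b \<Longrightarrow> 3 \<le> card {u\<in>repeated_colour_vertices k a b \<phi>. u div k = m}"
  shows "\<exists>W\<subseteq>repeated_colour_vertices k a b \<phi>. (\<forall>x. even (card {v\<in>W. \<phi> v = x})) \<and>
           (\<forall>v\<in>repeated_colour_vertices k a b \<phi>. 2 \<le> card {u\<in>W. u div k = v div k})"
proof (rule exists_even_colour_classes_subset[OF finite_repeated_colour_vertices[OF \<open>0 < k\<close>]])
  let ?R = "repeated_colour_vertices k a b \<phi>"
  show "inj_on \<phi> {v\<in>?R. v div k = m}" for m
  proof (cases "m < n")
    case True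
    show ?thesis
      using anagram_free_colouring_inj_on_block[OF \<open>0 < k\<close> afc True] by (rule inj_on_subset) blast
  next
    case False
    then have empty: "{v\<in>?R. v div k = m} = {}"
      using \<open>b \<le> n\<close> by (auto simp: repeated_colour_vertices_def blocks_def)
    show ?thesis
      unfolding empty by simp
  qed
  show "2 \<le> card {u\<in>?R. \<phi> u = \<phi> v}" if "v \<in> ?R" for v
  proof -
    obtain u where "u \<in> blocks k a b" "u \<noteq> v" "\<phi> u = \<phi> v"
      using \<open>v \<in> ?R\<close> unfolding repeated_colour_vertices_def by blast
    moreover have "v \<in> blocks k a b"
      using \<open>v \<in> ?R\<close> unfolding repeated_colour_vertices_def by blast
    ultimately have "{u, v} \<subseteq> {u\<in>?R. \<phi> u = \<phi> v}"
      using \<open>v \<in> ?R\<close> unfolding repeated_colour_vertices_def by auto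
    moreover have "finite {u\<in>?R. \<phi> u = \<phi> v}"
      using finite_repeated_colour_vertices[OF \<open>0 < k\<close>, of a b \<phi>] by simp
    ultimately show ?thesis
      using \<open>u \<noteq> v\<close> card_mono[of "{u\<in>?R. \<phi> u = \<phi> v}" "{u, v}"] by simp
  qed
  show "3 \<le> card {u\<in>?R. u div k = v div k}" if "v \<in> ?R" for v
    using three that by (auto simp: repeated_colour_vertices_def blocks_def)
qed

lemma block_with_unique_colours:
  assumes "3 \<le> k" and afc: "anagram_free_colouring (path_blowup_vertices k n) (path_blowup_adj k n) \<phi> c"
    and "a < b" "b \<le> n"
  shows "\<exists>m. a \<le> m \<and> m < b \<and> k - 2 \<le> card (unique_colour_vertices k a b \<phi> m)"
proof (rule ccontr)
  assume no_block: "\<not> ?thesis"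
  let ?R = "repeated_colour_vertices k a b \<phi>"
  have "0 < k"
    using \<open>3 \<le> k\<close> by simp
  have three: "3 \<le> card {u\<in>?R. u div k = m}" if "a \<le> m" "m < b" for m
  proof -
    have "\<not> k - 2 \<le> card (unique_colour_vertices k a b \<phi> m)"
      using no_block that by blast
    then show ?thesis
      using card_block_le_unique_plus_repeated[OF \<open>0 < k\<close> that, of \<phi>] \<open>3 \<le> k\<close> by linarith
  qed
  obtain W where "W \<subseteq> ?R" and even_colours: "\<forall>x. even (card {v\<in>W. \<phi> v = x})"
    and two: "\<forall>v\<in>?R. 2 \<le> card {u\<in>W. u div k = v div k}"
    using exists_even_colour_classes_repeated[OF \<open>0 < k\<close> afc \<open>b \<le> n\<close> three] by blast
  have "finite W"
    using \<open>W \<subseteq> ?R\<close> finite_repeated_colour_vertices[OF \<open>0 < k\<close>] by (rule finite_subset)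
  have "\<exists>A\<subseteq>W. image_mset \<phi> (mset_set A) = image_mset \<phi> (mset_set (W - A)) \<and>
      (\<forall>v\<in>W. (\<exists>a\<in>A. a div k = v div k) \<and> (\<exists>b\<in>W - A. b div k = v div k))"
    by (rule balanced_split[OF \<open>finite W\<close>]) (use even_colours two \<open>W \<subseteq> ?R\<close> in auto)
  then obtain A where "A \<subseteq> W" and balanced: "image_mset \<phi> (mset_set A) = image_mset \<phi> (mset_set (W - A))"
    and meets_W: "\<And>w. w \<in> W \<Longrightarrow> (\<exists>a\<in>A. a div k = w div k) \<and> (\<exists>b\<in>W - A. b div k = w div k)"
    by blast
  have "(\<exists>v\<in>A. v div k = m) \<and> (\<exists>v\<in>W - A. v div k = m)" if "a \<le> m" "m < b" for m
  proof -
    have "{u\<in>?R. u div k = m} \<noteq> {}"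
      using three[OF that] by (intro notI) simp
    then obtain v where "v \<in> ?R" "v div k = m"
      by blast
    then have "{u\<in>W. u div k = m} \<noteq> {}"
      using two by (intro notI) (metis card.empty not_numeral_le_zero)
    then obtain w where "w \<in> W" "w div k = m"
      by blast
    then show ?thesis
      using meets_W[OF \<open>w \<in> W\<close>] by simp
  qed
  moreover have "A \<subseteq> blocks k a b" "W - A \<subseteq> blocks k a b"
    using \<open>A \<subseteq> W\<close> \<open>W \<subseteq> ?R\<close> by (auto simp: repeated_colour_vertices_def)
  ultimately show False
    using balanced_blocks_not_anagram_free[OF \<open>0 < k\<close> \<open>a < b\<close> \<open>b \<le> n\<close>, of A "W - A" \<phi> c] balanced afc
    by blast
qed

lemma colours_of_blocks_step:
  assumes "3 \<le> k" and afc: "anagram_free_colouring (path_blowup_vertices k n) (path_blowup_adj k n) \<phi> c"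
    and "a < b" "b \<le> n"
  shows "\<exists>m. a \<le> m \<and> m < b \<and>
    (\<forall>S\<subseteq>blocks k a b. (\<forall>v\<in>S. v div k \<noteq> m) \<longrightarrow> card (\<phi> ` S) + (k - 2) \<le> card (\<phi> ` blocks k a b))"
proof -
  obtain m where "a \<le> m" "m < b" and unique: "k - 2 \<le> card (unique_colour_vertices k a b \<phi> m)"
    using block_with_unique_colours[OF assms] by blast
  define U where "U = unique_colour_vertices k a b \<phi> m"
  have "U \<subseteq> blocks k a b"
    using \<open>a \<le> m\<close> \<open>m < b\<close> by (auto simp: U_def unique_colour_vertices_def blocks_def)
  then have "inj_on \<phi> U"
    by (auto simp: U_def unique_colour_vertices_def inj_on_def)
  have "finite (blocks k a b)"
    using \<open>3 \<le> k\<close> by (simp add: finite_blocks)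
  have step: "card (\<phi> ` S) + (k - 2) \<le> card (\<phi> ` blocks k a b)"
    if "S \<subseteq> blocks k a b" "\<forall>v\<in>S. v div k \<noteq> m" for S
  proof -
    have "\<phi> ` S \<inter> \<phi> ` U = {}"
      using that by (auto simp: U_def unique_colour_vertices_def)
    then have "card (\<phi> ` S) + card (\<phi> ` U) = card (\<phi> ` S \<union> \<phi> ` U)"
      using that(1) \<open>U \<subseteq> blocks k a b\<close> \<open>finite (blocks k a b)\<close>
      by (intro card_Un_disjoint[symmetric]) (auto intro: finite_subset)
    also have "\<dots> \<le> card (\<phi> ` blocks k a b)"
      using that(1) \<open>U \<subseteq> blocks k a b\<close> \<open>finite (blocks k a b)\<close> by (intro card_mono) auto
    finally show ?thesis
      using unique card_image[OF \<open>inj_on \<phi> U\<close>] unfolding U_def by linarith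
  qed
  with \<open>a \<le> m\<close> \<open>m < b\<close> show ?thesis
    by blast
qed

text \<open>Remove a block with k - 2 colours unique in the range and recurse into the longer side.\<close>
lemma colours_of_blocks:
  assumes "3 \<le> k" and afc: "anagram_free_colouring (path_blowup_vertices k n) (path_blowup_adj k n) \<phi> c"
  shows "2 ^ h \<le> b - a \<Longrightarrow> b \<le> n \<Longrightarrow> (k - 2) * (h + 1) \<le> card (\<phi> ` blocks k a b)"
proof (induction h arbitrary: a b)
  case 0
  then have "a < b"
    by simp
  then obtain m where "\<forall>S\<subseteq>blocks k a b. (\<forall>v\<in>S. v div k \<noteq> m) \<longrightarrow>
      card (\<phi> ` S) + (k - 2) \<le> card (\<phi> ` blocks k a b)"
    using colours_of_blocks_step[OF assms _ \<open>b \<le> n\<close>] by blast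
  from this[rule_format, of "{}"] show ?case
    by simp
next
  case (Suc h)
  have "(0::nat) < 2 ^ Suc h"
    by simp
  then have "a < b"
    using Suc.prems(1) by linarith
  obtain m where "a \<le> m" "m < b" and step: "\<forall>S\<subseteq>blocks k a b. (\<forall>v\<in>S. v div k \<noteq> m) \<longrightarrow>
      card (\<phi> ` S) + (k - 2) \<le> card (\<phi> ` blocks k a b)"
    using colours_of_blocks_step[OF assms \<open>a < b\<close> Suc.prems(2)] by blast
  obtain a' b' where "a \<le> a'" "b' \<le> b" "m \<notin> {a'..<b'}" "2 ^ h \<le> b' - a'"
  proof (cases "2 ^ h \<le> m - a")
    case True
    then show ?thesis
      using that[of a m] \<open>m < b\<close> by simp
  next
    case False
    have "(2::nat) ^ Suc h = 2 * 2 ^ h"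
      by simp
    then have "2 ^ h \<le> b - Suc m"
      using False Suc.prems(1) \<open>a \<le> m\<close> \<open>m < b\<close> by linarith
    then show ?thesis
      using that[of "Suc m" b] \<open>a \<le> m\<close> by simp
  qed
  then have "blocks k a' b' \<subseteq> blocks k a b" "\<forall>v\<in>blocks k a' b'. v div k \<noteq> m"
    by (auto simp: blocks_def)
  then have "card (\<phi> ` blocks k a' b') + (k - 2) \<le> card (\<phi> ` blocks k a b)"
    using step by blast
  moreover have "(k - 2) * (h + 1) \<le> card (\<phi> ` blocks k a' b')"
    using Suc.IH \<open>2 ^ h \<le> b' - a'\<close> \<open>b' \<le> b\<close> Suc.prems(2) by simp
  ultimately show ?case
    by simp
qed

lemma anagram_free_colouring_path_blowup_bound:
  assumes "3 \<le> k" and afc: "anagram_free_colouring (path_blowup_vertices k n) (path_blowup_adj k n) \<phi> c"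
    and "1 \<le> n"
  shows "(real k - 2) * log 2 n \<le> c"
proof -
  obtain h where "2 ^ h \<le> n" "n < 2 ^ (h + 1)"
    using ex_power_ivl1[of 2 n] \<open>1 \<le> n\<close> by auto
  have "(k - 2) * (h + 1) \<le> card (\<phi> ` path_blowup_vertices k n)"
    using colours_of_blocks[OF assms(1,2), of h n 0] \<open>2 ^ h \<le> n\<close> \<open>3 \<le> k\<close>
    by (simp add: path_blowup_vertices_eq_blocks)
  also have "\<dots> \<le> c"
    using afc card_mono[of "{1..c}"] unfolding anagram_free_colouring_def by fastforce
  finally have "real ((k - 2) * (h + 1)) \<le> c"
    by linarith
  moreover have "real (k - 2) = real k - 2"
    using \<open>3 \<le> k\<close> by simp
  then have "real ((k - 2) * (h + 1)) = (real k - 2) * (h + 1)"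
    by (simp only: of_nat_mult of_nat_add of_nat_1)
  moreover have "log 2 n < h + 1"
    using log2_of_power_less[of n "h + 1"] \<open>n < 2 ^ (h + 1)\<close> \<open>1 \<le> n\<close> by simp
  then have "(real k - 2) * log 2 n \<le> (real k - 2) * (h + 1)"
    using \<open>3 \<le> k\<close> by (intro mult_left_mono) simp_all
  ultimately show ?thesis
    by linarith
qed

theorem theorem2:
  fixes n k :: nat
  assumes "n \<ge> 1" and "k \<ge> 3"
  shows "\<exists>(V :: nat set) E. sgraph V E \<and> card V = k * n \<and>
           pathwidth V E \<le> 2 * k - 1 \<and> max_degree V E \<le> 3 * k - 1 \<and>
           real (anagram_chromatic_number V E) \<ge> (real k - 2) * log 2 (real n / 3)"
proof -
  let ?V = "path_blowup_vertices k n" and ?E = "path_blowup_adj k n"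
  have "inj_on Suc ?V" "Suc ` ?V \<subseteq> {1..k * n}"
    by (auto simp: path_blowup_vertices_def)
  then have "anagram_free_colouring ?V ?E Suc (k * n)"
    by (rule injective_colouring_anagram_free)
  then have "\<exists>c \<phi>. anagram_free_colouring ?V ?E \<phi> c"
    by blast
  then have "\<exists>\<phi>. anagram_free_colouring ?V ?E \<phi> (anagram_chromatic_number ?V ?E)"
    unfolding anagram_chromatic_number_def by (rule LeastI_ex)
  then obtain \<phi> where "anagram_free_colouring ?V ?E \<phi> (anagram_chromatic_number ?V ?E)"
    by blast
  then have "(real k - 2) * log 2 n \<le> anagram_chromatic_number ?V ?E"
    using anagram_free_colouring_path_blowup_bound assms by blast
  moreover have "(real k - 2) * log 2 (n / 3) \<le> (real k - 2) * log 2 n"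
    using assms by (intro mult_left_mono) simp_all
  ultimately have "(real k - 2) * log 2 (n / 3) \<le> anagram_chromatic_number ?V ?E"
    by linarith
  moreover have "0 < k"
    using assms(2) by simp
  ultimately show ?thesis
    using sgraph_path_blowup card_path_blowup_vertices pathwidth_path_blowup max_degree_path_blowup
    by (intro exI[of _ ?V] exI[of _ ?E] conjI) simp_all
qed

end
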